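(* Let $\Sigma$ be a finite nonempty set and let $\{(A_i,B_i)\in\mathbb{R}^{n\times n}\times\mathbb{R}^{n\times m} : i\in\Sigma\}$ be given. The switched control system $x(k+1)=A_{\sigma(k)}x(k)+B_{\sigma(k)}u(k)$ is mode-independent feedback stabilizable (IFS) if and only if it is current-mode-independent memory-feedback stabilizable (IFS$_m$).
   Context: Let $\Sigma$ be a finite nonempty set (alphabet) and $\{(A_i,B_i)\in\mathbb{R}^{n\times n}\times\mathbb{R}^{n\times m} : i\in\Sigma\}$. Consider the discrete-time switched control system $x(k+1)=A_{\sigma(k)}x(k)+B_{\sigma(k)}u(k)$, $k\in\mathbb{N}=\{0,1,2,\dots\}$, where the switching signal $\sigma:\mathbb{N}\to\Sigma$ is arbitrary (the set of all such signals is denoted $\Sigma^\omega$) and $u(k)\in\mathbb{R}^m$ is the control. $\|\cdot\|$ is the Euclidean norm. Let $\mathcal{H}$ be the set of all tuples $(x_k,\dots,x_0;\,i_k,\dots,i_0)$ with $k\in\mathbb{N}$, $x_j\in\mathbb{R}^n$, $i_j\in\Sigma$ (state string and mode string of equal length $k+1$), and let $\mathcal{H}_-$ be the set of all tuples $(x_k,\dots,x_0;\,i_{k-1},\dots,i_0)$ with $k\in\mathbb{N}$ (mode string one shorter than the state string; empty when $k=0$). Controllers are arbitrary functions (no regularity assumed) of the following kinds, each determining, for every $x_0\in\mathbb{R}^n$ and $\sigma\in\Sigma^\omega$, a unique closed-loop trajectory with $x(0)=x_0$: (1) static mode-independent $\Phi:\mathbb{R}^n\to\mathbb{R}^m$,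 with $u(k)=\Phi(x(k))$; (1)$^d$ static mode-dependent $\Phi_d:\Sigma\times\mathbb{R}^n\to\mathbb{R}^m$, with $u(k)=\Phi_d(\sigma(k),x(k))$; (2) current-mode-independent with memory $\Psi:\mathcal{H}_-\to\mathbb{R}^m$, with $u(k)=\Psi(x(k),\dots,x(0);\,\sigma(k-1),\dots,\sigma(0))$; (2)$^d$ current-mode-dependent with memory $\Psi_d:\mathcal{H}\to\mathbb{R}^m$, with $u(k)=\Psi_d(x(k),\dots,x(0);\,\sigma(k),\dots,\sigma(0))$. The closed loop is uniformly exponentially stable (UES) if there exist $M>0$ and $\gamma\in[0,1)$ such that $\|x(k)\|\le M\gamma^k\|x_0\|$ for all $x_0\in\mathbb{R}^n$, all $\sigma\in\Sigma^\omega$ and all $k\in\mathbb{N}$. The system is called IFS, DFS, IFS$_m$, DFS$_m$ if there exists a controller of kind (1), (1)$^d$, (2), (2)$^d$ respectively such that the closed loop is UES. *)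

theory Defs
  imports "HOL-Analysis.Analysis"
begin

primrec traj_static ::
  "('s \<Rightarrow> real^'n^'n) \<Rightarrow> ('s \<Rightarrow> real^'m^'n) \<Rightarrow> (real^'n \<Rightarrow> real^'m)
   \<Rightarrow> real^'n \<Rightarrow> (nat \<Rightarrow> 's) \<Rightarrow> nat \<Rightarrow> real^'n" where
  "traj_static A B \<Phi> x0 \<sigma> 0 = x0"
| "traj_static A B \<Phi> x0 \<sigma> (Suc k) =
     A (\<sigma> k) *v traj_static A B \<Phi> x0 \<sigma> k + B (\<sigma> k) *v \<Phi> (traj_static A B \<Phi> x0 \<sigma> k)"

text \<open>Closed loop under a current-mode-independent controller with memory
  Psi : H_- -> R^m. An element (x_k,...,x_0; i_{k-1},...,i_0) of H_- is encoded as
  the pair of lists [x_k,...,x_0] and [i_{k-1},...,i_0].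
  hist_mem ... k is the state string [x(k),...,x(0)].\<close>
primrec hist_mem ::
  "('s \<Rightarrow> real^'n^'n) \<Rightarrow> ('s \<Rightarrow> real^'m^'n) \<Rightarrow> ((real^'n) list \<Rightarrow> 's list \<Rightarrow> real^'m)
   \<Rightarrow> real^'n \<Rightarrow> (nat \<Rightarrow> 's) \<Rightarrow> nat \<Rightarrow> (real^'n) list" where
  "hist_mem A B \<Psi> x0 \<sigma> 0 = [x0]"
| "hist_mem A B \<Psi> x0 \<sigma> (Suc k) =
     (let h = hist_mem A B \<Psi> x0 \<sigma> k
      in (A (\<sigma> k) *v hd h + B (\<sigma> k) *v \<Psi> h (rev (map \<sigma> [0..<k]))) # h)"

definition traj_mem ::
  "('s \<Rightarrow> real^'n^'n) \<Rightarrow> ('s \<Rightarrow> real^'m^'n) \<Rightarrow> ((real^'n) list \<Rightarrow> 's list \<Rightarrow> real^'m)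
   \<Rightarrow> real^'n \<Rightarrow> (nat \<Rightarrow> 's) \<Rightarrow> nat \<Rightarrow> real^'n" where
  "traj_mem A B \<Psi> x0 \<sigma> k = hd (hist_mem A B \<Psi> x0 \<sigma> k)"

definition UES :: "(real^'n \<Rightarrow> (nat \<Rightarrow> 's) \<Rightarrow> nat \<Rightarrow> real^'n) \<Rightarrow> bool" where
  "UES traj \<longleftrightarrow> (\<exists>M>0. \<exists>\<gamma>. 0 \<le> \<gamma> \<and> \<gamma> < 1 \<and>
     (\<forall>x0 \<sigma> k. norm (traj x0 \<sigma> k) \<le> M * \<gamma> ^ k * norm x0))"

definition IFS :: "('s \<Rightarrow> real^'n^'n) \<Rightarrow> ('s \<Rightarrow> real^'m^'n) \<Rightarrow> bool" where
  "IFS A B \<longleftrightarrow> (\<exists>\<Phi>. UES (traj_static A B \<Phi>))"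

definition IFS_m :: "('s \<Rightarrow> real^'n^'n) \<Rightarrow> ('s \<Rightarrow> real^'m^'n) \<Rightarrow> bool" where
  "IFS_m A B \<longleftrightarrow> (\<exists>\<Psi>. UES (traj_mem A B \<Psi>))"

end

theory Submission
  imports Defs
begin

text \<open>A static feedback is a memory feedback that ignores the history beyond the current
  state, so IFS implies IFS_m. Conversely, let a memory feedback give the bound
  M \<gamma>^k \<parallel>x0\<parallel> and fix \<gamma> < g < \<rho> < 1 with g > 0. Let W x be the least c such that
  some memory feedback started at x keeps the state below c g^k for every switching
  signal; then \<parallel>x\<parallel> \<le> W x \<le> M \<parallel>x\<parallel>. Choose for every x a memory feedback that is
  optimal up to the factor \<rho>/g. Its first control depends on x alone, and after one
  step in any mode i, the same feedback with x and i appended to its history witnesses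
  W x' \<le> \<rho> W x for the successor x'. Using that first control as a static feedback
  therefore makes W a Lyapunov function with decay rate \<rho>.\<close>

lemma hist_mem_not_Nil: "hist_mem A B \<Psi> x0 \<sigma> k \<noteq> []"
  by (cases k) (simp_all add: Let_def)

lemma traj_mem_static_feedback:
  "traj_mem A B (\<lambda>h s. \<Phi> (hd h)) x0 \<sigma> k = traj_static A B \<Phi> x0 \<sigma> k"
  unfolding traj_mem_def by (induction k) (simp_all add: Let_def)

lemma IFS_imp_IFS_m:
  assumes "IFS A B"
  shows "IFS_m A B"
  using assms unfolding IFS_def IFS_m_def UES_def traj_mem_static_feedback[symmetric] by blast

lemma hist_mem_shift:
  fixes \<Psi> :: "(real^'n) list \<Rightarrow> 's list \<Rightarrow> real^'m"
  shows "hist_mem A B (\<lambda>h s. \<Psi> (h @ [x]) (s @ [i])) (A i *v x + B i *v \<Psi> [x] []) \<sigma> k @ [x]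
         = hist_mem A B \<Psi> x (case_nat i \<sigma>) (Suc k)"
proof (induction k)
  case 0
  then show ?case by (simp add: Let_def)
next
  case (Suc k)
  let ?h = "hist_mem A B (\<lambda>h s. \<Psi> (h @ [x]) (s @ [i])) (A i *v x + B i *v \<Psi> [x] []) \<sigma> k"
  have hd_eq: "hd (?h @ [x]) = hd ?h"
    by (simp add: hd_append hist_mem_not_Nil)
  have modes_eq: "rev (map (case_nat i \<sigma>) [0..<Suc k]) = rev (map \<sigma> [0..<k]) @ [i]"
    by (simp add: map_upt_Suc del: upt_Suc)
  have "hist_mem A B (\<lambda>h s. \<Psi> (h @ [x]) (s @ [i])) (A i *v x + B i *v \<Psi> [x] []) \<sigma> (Suc k) @ [x]
      = (A (\<sigma> k) *v hd ?h + B (\<sigma> k) *v \<Psi> (?h @ [x]) (rev (map \<sigma> [0..<k]) @ [i])) # (?h @ [x])"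
    by (simp add: Let_def del: upt_Suc)
  also have "\<dots> = hist_mem A B \<Psi> x (case_nat i \<sigma>) (Suc (Suc k))"
    by (simp only: hist_mem.simps(2)[of A B \<Psi> x "case_nat i \<sigma>" "Suc k"] Suc.IH[symmetric]
        Let_def hd_eq modes_eq) simp
  finally show ?case .
qed

lemma traj_mem_shift:
  fixes \<Psi> :: "(real^'n) list \<Rightarrow> 's list \<Rightarrow> real^'m"
  shows "traj_mem A B (\<lambda>h s. \<Psi> (h @ [x]) (s @ [i])) (A i *v x + B i *v \<Psi> [x] []) \<sigma> k
         = traj_mem A B \<Psi> x (case_nat i \<sigma>) (Suc k)"
  unfolding traj_mem_def hist_mem_shift[symmetric] by (simp add: hd_append hist_mem_not_Nil)

lemma UES_traj_static_if_Lyapunov: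
  fixes V :: "real^'n \<Rightarrow> real"
  assumes "M > 0" "0 \<le> \<rho>" "\<rho> < 1"
    and V_lower: "\<And>x. norm x \<le> V x" and V_upper: "\<And>x. V x \<le> M * norm x"
    and V_decrease: "\<And>i x. V (A i *v x + B i *v \<Phi> x) \<le> \<rho> * V x"
  shows "UES (traj_static A B \<Phi>)"
proof -
  have V_traj: "V (traj_static A B \<Phi> x0 \<sigma> k) \<le> \<rho> ^ k * V x0" for x0 \<sigma> k
  proof (induction k)
    case (Suc k)
    have "V (traj_static A B \<Phi> x0 \<sigma> (Suc k)) \<le> \<rho> * V (traj_static A B \<Phi> x0 \<sigma> k)"
      using V_decrease by simp
    also have "\<dots> \<le> \<rho> * (\<rho> ^ k * V x0)"
      using Suc \<open>0 \<le> \<rho>\<close> by (simp add: mult_left_mono)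
    finally show ?case by simp
  qed simp
  have "norm (traj_static A B \<Phi> x0 \<sigma> k) \<le> M * \<rho> ^ k * norm x0" for x0 \<sigma> k
  proof -
    have "norm (traj_static A B \<Phi> x0 \<sigma> k) \<le> \<rho> ^ k * V x0"
      using V_lower V_traj order_trans by blast
    also have "\<dots> \<le> \<rho> ^ k * (M * norm x0)"
      using V_upper \<open>0 \<le> \<rho>\<close> by (simp add: mult_left_mono)
    finally show ?thesis by (simp add: mult_ac)
  qed
  then show ?thesis
    unfolding UES_def using assms(1-3) by blast
qed

definition mem_decay_bound ::
  "('s \<Rightarrow> real^'n^'n) \<Rightarrow> ('s \<Rightarrow> real^'m^'n) \<Rightarrow> ((real^'n) list \<Rightarrow> 's list \<Rightarrow> real^'m)
   \<Rightarrow> real \<Rightarrow> real^'n \<Rightarrow> real \<Rightarrow> bool" where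
  "mem_decay_bound A B \<Psi> g x c \<longleftrightarrow> (\<forall>\<sigma> k. norm (traj_mem A B \<Psi> x \<sigma> k) \<le> c * g ^ k)"

definition optimal_mem_decay_bound ::
  "('s \<Rightarrow> real^'n^'n) \<Rightarrow> ('s \<Rightarrow> real^'m^'n) \<Rightarrow> real \<Rightarrow> real^'n \<Rightarrow> real" where
  "optimal_mem_decay_bound A B g x = Inf {c. \<exists>\<Psi>. mem_decay_bound A B \<Psi> g x c}"

lemma mem_decay_bound_ge_norm: "mem_decay_bound A B \<Psi> g x c \<Longrightarrow> norm x \<le> c"
  unfolding mem_decay_bound_def by (drule spec2[of _ undefined 0]) (simp add: traj_mem_def)

lemma bdd_below_mem_decay_bounds: "bdd_below {c. \<exists>\<Psi>. mem_decay_bound A B \<Psi> g x c}"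
  by (rule bdd_belowI[of _ "norm x"]) (auto dest: mem_decay_bound_ge_norm)

lemma optimal_mem_decay_bound_le:
  assumes "mem_decay_bound A B \<Psi> g x c"
  shows "norm x \<le> optimal_mem_decay_bound A B g x" and "optimal_mem_decay_bound A B g x \<le> c"
proof -
  show "optimal_mem_decay_bound A B g x \<le> c"
    unfolding optimal_mem_decay_bound_def
    by (rule cInf_lower[OF _ bdd_below_mem_decay_bounds]) (use assms in blast)
  show "norm x \<le> optimal_mem_decay_bound A B g x"
    unfolding optimal_mem_decay_bound_def
    by (rule cInf_greatest) (use assms mem_decay_bound_ge_norm in blast)+
qed

lemma mem_decay_bound_shift:
  assumes "mem_decay_bound A B \<Psi> g x c"
  shows "mem_decay_bound A B (\<lambda>h s. \<Psi> (h @ [x]) (s @ [i])) g (A i *v x + B i *v \<Psi> [x] []) (c * g)"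
  unfolding mem_decay_bound_def
proof (intro allI)
  fix \<sigma> k
  have "norm (traj_mem A B \<Psi> x (case_nat i \<sigma>) (Suc k)) \<le> c * g ^ Suc k"
    using assms unfolding mem_decay_bound_def by blast
  then show "norm (traj_mem A B (\<lambda>h s. \<Psi> (h @ [x]) (s @ [i])) (A i *v x + B i *v \<Psi> [x] []) \<sigma> k)
      \<le> c * g * g ^ k"
    unfolding traj_mem_shift by (simp add: mult_ac)
qed

lemma nearly_optimal_mem_decay_bound:
  assumes bound: "mem_decay_bound A B \<Psi>0 g x (M * norm x)" and "0 < g" "g < \<rho>"
  obtains \<Psi> c where "mem_decay_bound A B \<Psi> g x c" "c * g \<le> \<rho> * optimal_mem_decay_bound A B g x"
proof (cases "x = 0")
  case True
  then show ?thesis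
    using that[of \<Psi>0 0] bound optimal_mem_decay_bound_le(1)[OF bound] assms(2,3) by simp
next
  case False
  let ?C = "{c. \<exists>\<Psi>. mem_decay_bound A B \<Psi> g x c}"
  let ?W = "optimal_mem_decay_bound A B g x"
  have nonempty: "?C \<noteq> {}"
    using bound by blast
  have approx: "\<exists>c\<in>?C. c < y" if "?W < y" for y
    using cInf_less_iff[OF nonempty bdd_below_mem_decay_bounds, of y] that
    unfolding optimal_mem_decay_bound_def by simp
  have "0 < ?W"
    using optimal_mem_decay_bound_le(1)[OF bound] False
    by (metis zero_less_norm_iff order_less_le_trans)
  then have "?W < \<rho> / g * ?W"
    using assms(2,3) by (simp add: field_simps)
  then have "\<exists>c\<in>?C. c < \<rho> / g * ?W"
    by (rule approx)
  then obtain \<Psi> c where "mem_decay_bound A B \<Psi> g x c" "c < \<rho> / g * ?W"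
    by blast
  moreover from this(2) have "c * g \<le> \<rho> * ?W"
    using \<open>0 < g\<close> by (simp add: field_simps)
  ultimately show ?thesis using that by blast
qed

lemma IFS_m_imp_IFS:
  assumes "IFS_m A B"
  shows "IFS A B"
proof -
  from assms obtain \<Psi>0 M \<gamma> where "M > 0" "0 \<le> \<gamma>" "\<gamma> < 1"
    and decay: "\<And>x0 \<sigma> k. norm (traj_mem A B \<Psi>0 x0 \<sigma> k) \<le> M * \<gamma> ^ k * norm x0"
    unfolding IFS_m_def UES_def by blast
  define g where "g = (1 + \<gamma>) / 2"
  define \<rho> where "\<rho> = (1 + g) / 2"
  have "0 < g" "g < \<rho>" "\<rho> < 1"
    using \<open>0 \<le> \<gamma>\<close> \<open>\<gamma> < 1\<close> by (auto simp: g_def \<rho>_def)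
  let ?W = "optimal_mem_decay_bound A B g"
  have bound0: "mem_decay_bound A B \<Psi>0 g x (M * norm x)" for x
    unfolding mem_decay_bound_def
  proof (intro allI)
    fix \<sigma> k
    have "M * \<gamma> ^ k * norm x \<le> M * g ^ k * norm x"
      using \<open>M > 0\<close> \<open>0 \<le> \<gamma>\<close> \<open>\<gamma> < 1\<close>
      by (intro mult_right_mono mult_left_mono power_mono) (auto simp: g_def)
    then show "norm (traj_mem A B \<Psi>0 x \<sigma> k) \<le> M * norm x * g ^ k"
      using decay[of x \<sigma> k] by (simp add: mult_ac)
  qed
  have "\<exists>\<Psi> c. mem_decay_bound A B \<Psi> g x c \<and> c * g \<le> \<rho> * ?W x" for x
    using nearly_optimal_mem_decay_bound[OF bound0 \<open>0 < g\<close> \<open>g < \<rho>\<close>] by blast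
  then obtain P C where P: "\<And>x. mem_decay_bound A B (P x) g x (C x)"
    and C: "\<And>x. C x * g \<le> \<rho> * ?W x"
    by metis
  define \<Phi> where "\<Phi> x = P x [x] []" for x
  have "UES (traj_static A B \<Phi>)"
  proof (rule UES_traj_static_if_Lyapunov[of M \<rho> ?W])
    show "0 \<le> \<rho>"
      using \<open>0 < g\<close> \<open>g < \<rho>\<close> by simp
    show "?W (A i *v x + B i *v \<Phi> x) \<le> \<rho> * ?W x" for i x
      using optimal_mem_decay_bound_le(2)[OF mem_decay_bound_shift[OF P]] C
      unfolding \<Phi>_def by (rule order_trans)
  qed (use \<open>M > 0\<close> \<open>\<rho> < 1\<close> optimal_mem_decay_bound_le[OF bound0] in auto)
  then show ?thesis
    unfolding IFS_def by blast
qed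

theorem theorem1:
  fixes A :: "'s::finite \<Rightarrow> real^'n^'n" and B :: "'s \<Rightarrow> real^'m^'n"
  shows "IFS A B \<longleftrightarrow> IFS_m A B"
  using IFS_imp_IFS_m IFS_m_imp_IFS by blast

end
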